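(* For $n>0$ and $J\subseteq S$, there is a bijection $\mathrm{NN}_n^J\simeq\mathrm{NC}_n^J$.
   Context: $S=\{s_1,\dots,s_{n-1}\}$ with $s_i=(i,i+1)$ the adjacent transpositions of $\mathfrak{S}_n$. For $J\subseteq S$, writing $J=S\setminus\{s_{j_1},\dots,s_{j_r}\}$ with $j_1<\dots<j_r$, the $J$-regions are $\{1,\dots,j_1\},\{j_1+1,\dots,j_2\},\dots,\{j_r+1,\dots,n\}$. For a set partition $\mathbf P$ of $[n]$, a bump is a pair $(a,b)$, $a<b$, with $a,b$ in the same part and no element of that part strictly between them. $\mathbf P$ is $J$-noncrossing if: (NC1) no two distinct elements of the same $J$-region lie in the same part; (NC2) whenever two distinct bumps $(i_1,i_2),(j_1,j_2)$ satisfy $i_1<j_1<i_2<j_2$, either $i_1,j_1$ lie in the same $J$-region or $i_2,j_1$ lie in the same $J$-region; (NC3) whenever two distinct bumps satisfy $i_1<j_1<j_2<i_2$, then $i_1$ and $j_1$ lie in different $J$-regions. $\mathbf P$ is $J$-nonnesting if (NN1) no two distinct elements of the same $J$-region lie in the same part, and (NN2) there are no two distinct bumps $(i_1,i_2),(j_1,j_2)$ with $i_1<j_1<j_2<i_2$. $\mathrm{NC}_n^J$ and $\mathrm{NN}_n^J$ denote the sets of $J$-noncrossing and $J$-nonnesting partitions of $[n]$. *)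

theory Defs
  imports Main "HOL-Library.Disjoint_Sets"
begin

text \<open>The generator s_i = (i,i+1) of S_n is identified with its index i; so
  S corresponds to {1..<n} and a subset J of S to a subset of {1..<n}.
  The J-regions are the blocks {1..j_1}, {j_1+1..j_2}, ..., {j_r+1..n}, where
  s_{j_1},...,s_{j_r} are the generators not in J.\<close>

definition same_region :: "nat \<Rightarrow> nat set \<Rightarrow> nat \<Rightarrow> nat \<Rightarrow> bool" where
  "same_region n J a b \<longleftrightarrow>
     (\<forall>k \<in> {1..<n} - J. \<not> (min a b \<le> k \<and> k < max a b))"

definition set_partitions :: "nat \<Rightarrow> nat set set set" where
  "set_partitions n = {P. partition_on {1..n} P}"

definition bump :: "nat set set \<Rightarrow> nat \<Rightarrow> nat \<Rightarrow> bool" where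
  "bump P a b \<longleftrightarrow> a < b \<and> (\<exists>B\<in>P. a \<in> B \<and> b \<in> B \<and> \<not> (\<exists>c\<in>B. a < c \<and> c < b))"

definition region_injective :: "nat \<Rightarrow> nat set \<Rightarrow> nat set set \<Rightarrow> bool" where
  "region_injective n J P \<longleftrightarrow>
     (\<forall>B\<in>P. \<forall>a\<in>B. \<forall>b\<in>B. a \<noteq> b \<longrightarrow> \<not> same_region n J a b)"

definition J_noncrossing :: "nat \<Rightarrow> nat set \<Rightarrow> nat set set \<Rightarrow> bool" where
  "J_noncrossing n J P \<longleftrightarrow>
     region_injective n J P \<and>
     (\<forall>i1 i2 j1 j2. bump P i1 i2 \<and> bump P j1 j2 \<and> (i1, i2) \<noteq> (j1, j2) \<and>
        i1 < j1 \<and> j1 < i2 \<and> i2 < j2 \<longrightarrow>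
        same_region n J i1 j1 \<or> same_region n J i2 j1) \<and>
     (\<forall>i1 i2 j1 j2. bump P i1 i2 \<and> bump P j1 j2 \<and> (i1, i2) \<noteq> (j1, j2) \<and>
        i1 < j1 \<and> j1 < j2 \<and> j2 < i2 \<longrightarrow>
        \<not> same_region n J i1 j1)"

definition J_nonnesting :: "nat \<Rightarrow> nat set \<Rightarrow> nat set set \<Rightarrow> bool" where
  "J_nonnesting n J P \<longleftrightarrow>
     region_injective n J P \<and>
     \<not> (\<exists>i1 i2 j1 j2. bump P i1 i2 \<and> bump P j1 j2 \<and> (i1, i2) \<noteq> (j1, j2) \<and>
        i1 < j1 \<and> j1 < j2 \<and> j2 < i2)"

definition NC :: "nat \<Rightarrow> nat set \<Rightarrow> nat set set set" where
  "NC n J = {P \<in> set_partitions n. J_noncrossing n J P}"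

definition NN :: "nat \<Rightarrow> nat set \<Rightarrow> nat set set set" where
  "NN n J = {P \<in> set_partitions n. J_nonnesting n J P}"

end

theory Submission
  imports Defs
begin

text \<open>
  The bumps of a set partition of [n] form an arc system: a partial matching of openers a to
  closers b > a. Conversely every arc system is the bump set of exactly one partition, whose
  blocks are the connected components of the arcs. For a rank function f on [n], an arc system
  is f-sorted if each closer is matched, among the openers still open at it and lying outside
  its J-region, to one of least rank. J-nonnesting means sorted for the natural order, and
  J-noncrossing means sorted for the order listing the J-regions from right to left.

  For injective f, each admissible pair (openers, closers) carries exactly one f-sorted
  region-separated arc system. An arc system of maximal weight \<open>\<Sum>(a, b). b * f a\<close> is sorted,
  because a violation is removed by exchanging two closers, which raises the weight. Two sorted
  arc systems agree, because at the f-least opener where they differ, sortedness forces a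
  difference at an opener of smaller rank. So NN and NC are both in bijection with the
  admissible endpoint pairs.
\<close>

section \<open>Set partitions as arc systems\<close>

definition arc_system :: "nat \<Rightarrow> (nat \<times> nat) set \<Rightarrow> bool" where
  "arc_system n M \<longleftrightarrow>
     M \<subseteq> {1..n} \<times> {1..n} \<and> (\<forall>(a, b)\<in>M. a < b) \<and> single_valued M \<and> single_valued (M\<inverse>)"

lemma arc_systemD:
  assumes "arc_system n M" "(a, b) \<in> M"
  shows "a < b" "a \<in> {1..n}" "b \<in> {1..n}"
  using assms by (auto simp: arc_system_def)

lemma arc_systemI:
  assumes "M \<subseteq> {1..n} \<times> {1..n}" "\<And>a b. (a, b) \<in> M \<Longrightarrow> a < b"
    and "\<And>a b c. (a, b) \<in> M \<Longrightarrow> (a, c) \<in> M \<Longrightarrow> b = c"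
    and "\<And>a b c. (a, c) \<in> M \<Longrightarrow> (b, c) \<in> M \<Longrightarrow> a = b"
  shows "arc_system n M"
  using assms unfolding arc_system_def single_valued_def by blast

lemma arc_system_right_unique: "arc_system n M \<Longrightarrow> (a, b) \<in> M \<Longrightarrow> (a, c) \<in> M \<Longrightarrow> b = c"
  by (auto simp: arc_system_def dest: single_valuedD)

lemma arc_system_left_unique: "arc_system n M \<Longrightarrow> (a, c) \<in> M \<Longrightarrow> (b, c) \<in> M \<Longrightarrow> a = b"
  by (auto simp: arc_system_def dest: single_valuedD)

lemma finite_arc_system: "arc_system n M \<Longrightarrow> finite M"
  unfolding arc_system_def by (meson finite_SigmaI finite_atLeastAtMost finite_subset)

definition bumps :: "nat set set \<Rightarrow> (nat \<times> nat) set" where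
  "bumps P = {(a, b). bump P a b}"

lemma mem_bumps_iff [simp]: "(a, b) \<in> bumps P \<longleftrightarrow> bump P a b"
  by (simp add: bumps_def)

lemma partition_on_block_unique:
  "partition_on A P \<Longrightarrow> B \<in> P \<Longrightarrow> B' \<in> P \<Longrightarrow> x \<in> B \<Longrightarrow> x \<in> B' \<Longrightarrow> B = B'"
  by (auto simp: partition_on_def disjoint_def)

lemma bumps_common_end_eq:
  assumes P: "partition_on A P" and bumps: "bump P a b" "bump P a' b'" and "a = a' \<or> b = b'"
  shows "a = a' \<and> b = b'"
proof -
  obtain B B' where B: "B \<in> P" "a \<in> B" "b \<in> B" "\<not> (\<exists>x\<in>B. a < x \<and> x < b)" "a < b"
    and B': "B' \<in> P" "a' \<in> B'" "b' \<in> B'" "\<not> (\<exists>x\<in>B'. a' < x \<and> x < b')" "a' < b'"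
    using bumps by (auto simp: bump_def)
  have "B = B'"
    using partition_on_block_unique[OF P B(1) B'(1)] B B' assms(4) by blast
  with B B' assms(4) show ?thesis
    by (meson linorder_neqE_nat)
qed

lemma arc_system_bumps:
  assumes P: "partition_on {1..n} P"
  shows "arc_system n (bumps P)"
proof -
  have "single_valued (bumps P)" "single_valued ((bumps P)\<inverse>)"
    using bumps_common_end_eq[OF P] by (auto intro!: single_valuedI)
  moreover have "bumps P \<subseteq> {1..n} \<times> {1..n}"
    using partition_onD1[OF P] by (auto simp: bump_def)
  ultimately show ?thesis
    by (auto simp: arc_system_def bump_def)
qed

lemma bump_exists_within_block:
  assumes P: "partition_on {1..n} P" and B: "B \<in> P" "a \<in> B" "b \<in> B" "a < b"
  shows "\<exists>c\<in>B. bump P a c \<and> c \<le> b"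
proof -
  let ?C = "{c\<in>B. a < c}"
  have "B \<subseteq> {1..n}"
    using partition_onD1[OF P] B(1) by blast
  then have "finite ?C"
    by (auto intro: finite_subset)
  moreover have "b \<in> ?C"
    using B by simp
  ultimately have "Min ?C \<in> ?C" "Min ?C \<le> b" "\<And>x. x \<in> ?C \<Longrightarrow> Min ?C \<le> x"
    using Min_in Min_le by blast+
  then show ?thesis
    using B unfolding bump_def by (metis (no_types, lifting) leD mem_Collect_eq)
qed

lemma block_rtrancl_bumps:
  assumes P: "partition_on {1..n} P" and B: "B \<in> P" "x \<in> B" "y \<in> B" "x \<le> y"
  shows "(x, y) \<in> (bumps P)\<^sup>*"
  using B(2-4)
proof (induction "y - x" arbitrary: x rule: less_induct)
  case less
  show ?case
  proof (cases "x = y")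
    case False
    then obtain c where c: "c \<in> B" "bump P x c" "c \<le> y"
      using bump_exists_within_block[OF P B(1) less.prems(1,2)] less.prems(3) by auto
    moreover have "y - c < y - x"
      using c by (auto simp: bump_def)
    ultimately have "(c, y) \<in> (bumps P)\<^sup>*"
      using less.hyps[of c] less.prems(2) by blast
    with c(2) show ?thesis
      by (simp add: converse_rtrancl_into_rtrancl)
  qed simp
qed

definition arc_equiv :: "nat \<Rightarrow> (nat \<times> nat) set \<Rightarrow> (nat \<times> nat) set" where
  "arc_equiv n M = (M \<union> M\<inverse>)\<^sup>* \<inter> {1..n} \<times> {1..n}"

lemma equiv_arc_equiv: "equiv {1..n} (arc_equiv n M)"
proof (rule equivI)
  show "refl_on {1..n} (arc_equiv n M)"
    by (auto simp: arc_equiv_def refl_on_def)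
  show "sym (arc_equiv n M)"
    unfolding arc_equiv_def by (intro sym_Int sym_rtrancl) (auto simp: sym_def)
  show "trans (arc_equiv n M)"
    unfolding arc_equiv_def by (intro trans_Int trans_rtrancl) (auto simp: trans_def)
qed (auto simp: arc_equiv_def)

lemma rtrancl_bumps_within_block:
  assumes P: "partition_on {1..n} P" and B: "B \<in> P" "x \<in> B"
    and xy: "(x, y) \<in> (bumps P \<union> (bumps P)\<inverse>)\<^sup>*"
  shows "y \<in> B"
  using xy
proof induction
  case (step y z)
  then obtain B' where "B' \<in> P" "y \<in> B'" "z \<in> B'"
    by (auto simp: bump_def)
  with step.IH show ?case
    using partition_on_block_unique[OF P B(1)] by blast
qed (rule B(2))

lemma arc_equiv_bumps_iff:
  assumes P: "partition_on {1..n} P"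
  shows "(x, y) \<in> arc_equiv n (bumps P) \<longleftrightarrow> (\<exists>B\<in>P. x \<in> B \<and> y \<in> B)"
proof
  assume "(x, y) \<in> arc_equiv n (bumps P)"
  then have "x \<in> \<Union>P" "(x, y) \<in> (bumps P \<union> (bumps P)\<inverse>)\<^sup>*"
    using partition_onD1[OF P] by (auto simp: arc_equiv_def)
  then show "\<exists>B\<in>P. x \<in> B \<and> y \<in> B"
    using rtrancl_bumps_within_block[OF P] by blast
next
  assume "\<exists>B\<in>P. x \<in> B \<and> y \<in> B"
  then obtain B where B: "B \<in> P" "x \<in> B" "y \<in> B"
    by blast
  with block_rtrancl_bumps[OF P] have "(x, y) \<in> (bumps P)\<^sup>* \<or> (y, x) \<in> (bumps P)\<^sup>*"
    by (metis nat_le_linear)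
  then have "(x, y) \<in> (bumps P)\<^sup>* \<or> (x, y) \<in> ((bumps P)\<inverse>)\<^sup>*"
    by (auto intro: rtrancl_converseI)
  then have "(x, y) \<in> (bumps P \<union> (bumps P)\<inverse>)\<^sup>*"
    by (rule in_rtrancl_UnI)
  moreover have "x \<in> {1..n}" "y \<in> {1..n}"
    using partition_onD1[OF P] B by auto
  ultimately show "(x, y) \<in> arc_equiv n (bumps P)"
    by (simp add: arc_equiv_def)
qed

lemma quotient_arc_equiv_bumps:
  assumes P: "partition_on {1..n} P"
  shows "{1..n} // arc_equiv n (bumps P) = P"
proof -
  have eq: "arc_equiv n (bumps P) = {(x, y). \<exists>B\<in>P. x \<in> B \<and> y \<in> B}"
  proof (rule set_eqI)
    fix p :: "nat \<times> nat"
    show "p \<in> arc_equiv n (bumps P) \<longleftrightarrow> p \<in> {(x, y). \<exists>B\<in>P. x \<in> B \<and> y \<in> B}"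
      using arc_equiv_bumps_iff[OF P, of "fst p" "snd p"] by (simp add: case_prod_beta)
  qed
  show ?thesis
    unfolding eq by (rule partition_on_eq_quotient[OF P])
qed

lemma arc_system_rtrancl_le:
  assumes "arc_system n M" "(x, y) \<in> M\<^sup>*"
  shows "x \<le> y"
  using assms(2) by induction (auto dest: arc_systemD(1)[OF assms(1)])

lemma arc_system_rtrancl_symcl:
  assumes M: "arc_system n M" and xy: "(x, y) \<in> (M \<union> M\<inverse>)\<^sup>*"
  shows "(x, y) \<in> M\<^sup>* \<or> (y, x) \<in> M\<^sup>*"
  using xy
proof induction
  case (step y z)
  have sv: "single_valued M" "single_valued (M\<inverse>)"
    using M by (auto simp: arc_system_def)
  from step.hyps(2) show ?case
  proof
    assume "(y, z) \<in> M"
    then have "(y, z) \<in> M\<^sup>*"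
      by simp
    with step.IH single_valued_confluent[OF sv(1)] show ?case
      by (meson rtrancl_trans)
  next
    assume "(y, z) \<in> M\<inverse>"
    then have "(y, z) \<in> (M\<inverse>)\<^sup>*" "(z, y) \<in> M\<^sup>*"
      by auto
    with step.IH single_valued_confluent[OF sv(2)] show ?case
      by (meson rtrancl_converseD rtrancl_converseI rtrancl_trans)
  qed
qed simp

lemma arc_equiv_imp_rtrancl:
  assumes M: "arc_system n M" and xy: "(x, y) \<in> arc_equiv n M" "x \<le> y"
  shows "(x, y) \<in> M\<^sup>*"
proof -
  have "(x, y) \<in> M\<^sup>* \<or> (y, x) \<in> M\<^sup>*"
    using arc_system_rtrancl_symcl[OF M] xy(1) unfolding arc_equiv_def by blast
  then show ?thesis
    using arc_system_rtrancl_le[OF M] xy(2) by (metis le_antisym rtrancl.rtrancl_refl)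
qed

lemma arc_system_rtrancl_first_arc:
  assumes M: "arc_system n M" and "(a, c) \<in> M\<^sup>*" "a \<noteq> c"
  obtains w where "(a, w) \<in> M" "a < w" "w \<le> c"
proof -
  obtain w where "(a, w) \<in> M" "(w, c) \<in> M\<^sup>*"
    using assms(2,3) by (metis converse_rtranclE)
  with arc_systemD(1)[OF M] arc_system_rtrancl_le[OF M] that show thesis
    by blast
qed

lemma arc_system_subset_arc_equiv: "arc_system n M \<Longrightarrow> M \<subseteq> arc_equiv n M"
  by (auto simp: arc_equiv_def dest: arc_systemD)

lemma bump_quotient_arc_equiv_imp_arc:
  assumes M: "arc_system n M" and bump: "bump ({1..n} // arc_equiv n M) a b"
  shows "(a, b) \<in> M"
proof -
  have equiv: "equiv {1..n} (arc_equiv n M)"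
    by (rule equiv_arc_equiv)
  obtain X where X: "X \<in> {1..n} // arc_equiv n M" "a \<in> X" "b \<in> X" "a < b"
    and between: "\<not> (\<exists>c\<in>X. a < c \<and> c < b)"
    using bump unfolding bump_def by blast
  have "(a, b) \<in> M\<^sup>*"
    using X in_quotient_imp_in_rel[OF equiv] by (auto intro: arc_equiv_imp_rtrancl[OF M])
  then obtain w where w: "(a, w) \<in> M" "a < w" "w \<le> b"
    using X(4) by (auto elim: arc_system_rtrancl_first_arc[OF M])
  have "w \<in> X"
    using in_quotient_imp_closed[OF equiv X(1,2)] w(1) arc_system_subset_arc_equiv[OF M] by blast
  with between w show ?thesis
    by (metis le_neq_implies_less)
qed

lemma arc_imp_bump_quotient_arc_equiv:
  assumes M: "arc_system n M" and ab: "(a, b) \<in> M"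
  shows "bump ({1..n} // arc_equiv n M) a b"
proof -
  let ?X = "arc_equiv n M `` {a}"
  have a: "a \<in> {1..n}" and "a < b"
    using arc_systemD[OF M ab] by simp_all
  have "\<not> (\<exists>c\<in>?X. a < c \<and> c < b)"
  proof
    assume "\<exists>c\<in>?X. a < c \<and> c < b"
    then obtain c where c: "(a, c) \<in> arc_equiv n M" "a < c" "c < b"
      by blast
    then have "(a, c) \<in> M\<^sup>*"
      by (simp add: arc_equiv_imp_rtrancl[OF M])
    then obtain w where "(a, w) \<in> M" "w \<le> c"
      using c(2) by (auto elim: arc_system_rtrancl_first_arc[OF M])
    with arc_system_right_unique[OF M ab] c(3) show False
      by auto
  qed
  moreover have "a \<in> ?X" "b \<in> ?X"
    using a ab arc_system_subset_arc_equiv[OF M] by (auto simp: arc_equiv_def)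
  ultimately show ?thesis
    unfolding bump_def using quotientI[OF a] \<open>a < b\<close> by blast
qed

lemma bumps_quotient_arc_equiv:
  assumes "arc_system n M"
  shows "bumps ({1..n} // arc_equiv n M) = M"
  using bump_quotient_arc_equiv_imp_arc[OF assms] arc_imp_bump_quotient_arc_equiv[OF assms]
  by (auto simp: bumps_def)

lemma bij_betw_bumps: "bij_betw bumps (set_partitions n) {M. arc_system n M}"
  unfolding bij_betw_def
proof
  show "inj_on bumps (set_partitions n)"
  proof (rule inj_onI)
    fix P Q assume "P \<in> set_partitions n" "Q \<in> set_partitions n" "bumps P = bumps Q"
    then show "P = Q"
      using quotient_arc_equiv_bumps by (metis mem_Collect_eq set_partitions_def)
  qed
  have "M \<in> bumps ` set_partitions n" if "arc_system n M" for M
    using bumps_quotient_arc_equiv[OF that] partition_on_quotient[OF equiv_arc_equiv]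
    by (metis image_eqI mem_Collect_eq set_partitions_def)
  then show "bumps ` set_partitions n = {M. arc_system n M}"
    by (auto simp: set_partitions_def arc_system_bumps)
qed

section \<open>J-regions\<close>

lemma same_region_iff_no_cut:
  "a < b \<Longrightarrow> same_region n J a b \<longleftrightarrow> (\<forall>k\<in>{1..<n} - J. \<not> (a \<le> k \<and> k < b))"
  by (simp add: same_region_def)

lemma same_region_commute: "same_region n J a b \<longleftrightarrow> same_region n J b a"
  by (simp add: same_region_def min.commute max.commute)

lemma not_same_region_widen:
  assumes "a \<le> a'" "a' < b'" "b' \<le> b" "\<not> same_region n J a' b'"
  shows "\<not> same_region n J a b"
proof -
  from assms(2,4) obtain k where "k \<in> {1..<n} - J" "a' \<le> k" "k < b'"
    by (auto simp: same_region_iff_no_cut)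
  moreover from assms(1-3) have "a < b"
    by simp
  ultimately show ?thesis
    using assms(1,3) same_region_iff_no_cut[of a b n J] by (meson order_trans order_less_le_trans)
qed

definition region_separated :: "nat \<Rightarrow> nat set \<Rightarrow> (nat \<times> nat) set \<Rightarrow> bool" where
  "region_separated n J M \<longleftrightarrow> (\<forall>(a, b)\<in>M. \<not> same_region n J a b)"

lemma region_injective_iff_region_separated:
  assumes P: "partition_on {1..n} P"
  shows "region_injective n J P \<longleftrightarrow> region_separated n J (bumps P)"
proof
  assume "region_injective n J P"
  then show "region_separated n J (bumps P)"
    unfolding region_injective_def region_separated_def by (auto simp: bump_def)
next
  assume sep: "region_separated n J (bumps P)"
  have "\<not> same_region n J a b" if B: "B \<in> P" "a \<in> B" "b \<in> B" "a < b" for B a b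
  proof -
    obtain c where c: "bump P a c" "c \<le> b"
      using bump_exists_within_block[OF P B] by blast
    then have "(a, c) \<in> bumps P" "a < c"
      by (simp_all add: bump_def)
    then have "\<not> same_region n J a c" "a < c"
      using sep unfolding region_separated_def by blast+
    with c(2) show ?thesis
      by (meson not_same_region_widen order_refl)
  qed
  then show "region_injective n J P"
    unfolding region_injective_def by (metis linorder_neqE_nat same_region_commute)
qed

text \<open>Lists the J-regions from right to left, and each region in increasing order.\<close>

definition region_rank :: "nat \<Rightarrow> nat set \<Rightarrow> nat \<Rightarrow> int" where
  "region_rank n J x = int ((n + 1) * card {k \<in> {1..<n} - J. x \<le> k} + x)"

lemma region_rank_less_if_same_region:
  assumes "a < b" "same_region n J a b"
  shows "region_rank n J a < region_rank n J b"
proof -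
  have "{k \<in> {1..<n} - J. b \<le> k} = {k \<in> {1..<n} - J. a \<le> k}"
    using assms by (auto simp: same_region_iff_no_cut)
  with assms(1) show ?thesis
    by (simp add: region_rank_def)
qed

lemma region_rank_less_if_not_same_region:
  assumes "a < b" "b \<le> n" "\<not> same_region n J a b"
  shows "region_rank n J b < region_rank n J a"
proof -
  let ?C = "\<lambda>x. {k \<in> {1..<n} - J. x \<le> k}"
  obtain k where "k \<in> ?C a" "k \<notin> ?C b"
    using assms(1,3) by (auto simp: same_region_iff_no_cut)
  moreover have "?C b \<subseteq> ?C a"
    using assms(1) by auto
  ultimately have "card (?C b) < card (?C a)"
    by (intro psubset_card_mono) auto
  then have "(n + 1) * Suc (card (?C b)) \<le> (n + 1) * card (?C a)"
    by (intro mult_le_mono2) simp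
  with assms(2) have "(n + 1) * card (?C b) + b < (n + 1) * card (?C a) + a"
    by simp
  then show ?thesis
    by (simp only: region_rank_def of_nat_less_iff)
qed

lemma inj_on_region_rank: "inj_on (region_rank n J) {1..n}"
proof (rule inj_onI)
  have neq: "region_rank n J a \<noteq> region_rank n J b" if "a < b" "b \<le> n" for a b
    using that region_rank_less_if_same_region[of a b n J]
      region_rank_less_if_not_same_region[of a b n J]
    by (cases "same_region n J a b") auto
  fix x y assume "x \<in> {1..n}" "y \<in> {1..n}" "region_rank n J x = region_rank n J y"
  with neq[of x y] neq[of y x] show "x = y"
    by (metis atLeastAtMost_iff linorder_neqE_nat)
qed

section \<open>Sorted arc systems\<close>

definition sorted_arcs :: "nat \<Rightarrow> nat set \<Rightarrow> (nat \<Rightarrow> int) \<Rightarrow> (nat \<times> nat) set \<Rightarrow> bool" where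
  "sorted_arcs n J f M \<longleftrightarrow>
     (\<forall>a b a' b'. (a, b) \<in> M \<longrightarrow> (a', b') \<in> M \<longrightarrow> a < b' \<longrightarrow> b' < b \<longrightarrow>
        \<not> same_region n J a b' \<longrightarrow> f a' \<le> f a)"

definition arc_weight :: "(nat \<Rightarrow> int) \<Rightarrow> (nat \<times> nat) set \<Rightarrow> int" where
  "arc_weight f M = (\<Sum>(a, b)\<in>M. int b * f a)"

definition arc_endpoints :: "(nat \<times> nat) set \<Rightarrow> nat set \<times> nat set" where
  "arc_endpoints M = (Domain M, Range M)"

lemma arc_weight_exchange:
  assumes "finite M" "(a, b) \<in> M" "(a', b') \<in> M" "(a, b') \<notin> M" "(a', b) \<notin> M" "a \<noteq> a'"
  shows "arc_weight f (insert (a, b') (insert (a', b) (M - {(a, b), (a', b')}))) =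
           arc_weight f M + (int b - int b') * (f a' - f a)"
proof -
  let ?g = "\<lambda>(a, b). int b * f a"
  let ?M0 = "M - {(a, b), (a', b')}"
  have "arc_weight f M = sum ?g ?M0 + sum ?g {(a, b), (a', b')}"
    unfolding arc_weight_def using assms(1-3) by (intro sum.subset_diff) auto
  moreover have "sum ?g {(a, b), (a', b')} = int b * f a + int b' * f a'"
    using assms(6) by simp
  moreover have "arc_weight f (insert (a, b') (insert (a', b) ?M0)) =
                   int b' * f a + (int b * f a' + sum ?g ?M0)"
    unfolding arc_weight_def using assms(1,4-6) by simp
  ultimately show ?thesis
    by (simp add: algebra_simps)
qed

lemma exchange_unsorted_arcs:
  assumes M: "arc_system n M" and sep: "region_separated n J M"
    and arcs: "(a, b) \<in> M" "(a', b') \<in> M" and order: "a < b'" "b' < b"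
    and region: "\<not> same_region n J a b'"
  defines "M' \<equiv> insert (a, b') (insert (a', b) (M - {(a, b), (a', b')}))"
  shows "arc_system n M'" "region_separated n J M'" "arc_endpoints M' = arc_endpoints M"
    and "arc_weight f M' = arc_weight f M + (int b - int b') * (f a' - f a)"
proof -
  have "a' < b'"
    using arc_systemD(1)[OF M arcs(2)] .
  then have "a' < b"
    using order(2) by simp
  have "a \<noteq> a'"
    using arc_system_right_unique[OF M arcs(1), of b'] arcs(2) order(2) by auto
  have new_arcs: "(a, b') \<notin> M" "(a', b) \<notin> M"
    using arc_system_right_unique[OF M] arcs order(2) by (metis less_irrefl)+
  show "arc_system n M'"
  proof (rule arc_systemI)
    show "M' \<subseteq> {1..n} \<times> {1..n}" "\<And>x y. (x, y) \<in> M' \<Longrightarrow> x < y"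
      unfolding M'_def using arcs order(1) \<open>a' < b\<close> arc_systemD[OF M] by auto
    show "y = z" if "(x, y) \<in> M'" "(x, z) \<in> M'" for x y z
      using that \<open>a \<noteq> a'\<close> arc_system_right_unique[OF M] arcs
      unfolding M'_def by blast
    show "x = y" if "(x, z) \<in> M'" "(y, z) \<in> M'" for x y z
      using that order(2) arc_system_left_unique[OF M] arcs
      unfolding M'_def by (blast dest: less_imp_neq)
  qed
  have "\<not> same_region n J a' b"
    using sep arcs(2) not_same_region_widen[of a' a' b' b n J] \<open>a' < b'\<close> order(2)
    unfolding region_separated_def by auto
  then show "region_separated n J M'"
    using sep region unfolding M'_def region_separated_def by auto
  show "arc_endpoints M' = arc_endpoints M"
    unfolding M'_def arc_endpoints_def using arcs by blast
  show "arc_weight f M' = arc_weight f M + (int b - int b') * (f a' - f a)"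
    unfolding M'_def using arc_weight_exchange[OF finite_arc_system[OF M] arcs new_arcs \<open>a \<noteq> a'\<close>] .
qed

lemma exists_sorted_arcs:
  assumes "arc_system n M" "region_separated n J M"
  obtains M' where "arc_system n M'" "region_separated n J M'" "sorted_arcs n J f M'"
    "arc_endpoints M' = arc_endpoints M"
proof -
  let ?F = "{M'. arc_system n M' \<and> region_separated n J M' \<and> arc_endpoints M' = arc_endpoints M}"
  have "?F \<subseteq> Pow ({1..n} \<times> {1..n})"
    by (auto simp: arc_system_def)
  then have fin: "finite (arc_weight f ` ?F)"
    by (auto intro: finite_subset)
  have "M \<in> ?F"
    using assms by simp
  then have "Max (arc_weight f ` ?F) \<in> arc_weight f ` ?F"
    using fin by (intro Max_in) auto
  then obtain M' where M': "M' \<in> ?F" "arc_weight f M' = Max (arc_weight f ` ?F)"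
    by force
  have "sorted_arcs n J f M'"
  proof (rule ccontr)
    assume "\<not> sorted_arcs n J f M'"
    then obtain a b a' b' where arcs: "(a, b) \<in> M'" "(a', b') \<in> M'" and order: "a < b'" "b' < b"
      and region: "\<not> same_region n J a b'" and "f a < f a'"
      unfolding sorted_arcs_def by auto
    let ?M'' = "insert (a, b') (insert (a', b) (M' - {(a, b), (a', b')}))"
    have "?M'' \<in> ?F"
      using exchange_unsorted_arcs[of n M' J a b a' b'] M'(1) arcs order region by simp
    then have "arc_weight f ?M'' \<le> arc_weight f M'"
      unfolding M'(2) using fin by (intro Max_ge) auto
    moreover have "arc_weight f ?M'' = arc_weight f M' + (int b - int b') * (f a' - f a)"
      using exchange_unsorted_arcs(4)[of n M' J a b a' b'] M'(1) arcs order region by simp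
    moreover have "(int b - int b') * (f a' - f a) > 0"
      using order(2) \<open>f a < f a'\<close> by simp
    ultimately show False
      by simp
  qed
  with M'(1) that show ?thesis
    by blast
qed

lemma sorted_arcs_smaller_discrepancy:
  assumes M: "arc_system n M" and N: "arc_system n N" "region_separated n J N"
    and sorted: "sorted_arcs n J f M" and range: "Range M = Range N"
    and arcs: "(a, c) \<in> N" "(a, d) \<in> M" "c < d"
  obtains a' where "(a', c) \<in> M - N" "a' \<noteq> a" "f a' \<le> f a"
proof -
  obtain a' where a': "(a', c) \<in> M"
    using arcs(1) range by blast
  have "a' \<noteq> a"
    using arc_system_right_unique[OF M arcs(2), of c] a' arcs(3) by auto
  moreover have "(a', c) \<notin> N"
    using arc_system_left_unique[OF N(1) arcs(1)] \<open>a' \<noteq> a\<close> by auto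
  moreover have "a < c" "\<not> same_region n J a c"
    using arc_systemD(1)[OF N(1) arcs(1)] N(2) arcs(1) unfolding region_separated_def by auto
  then have "f a' \<le> f a"
    using sorted arcs(2,3) a' unfolding sorted_arcs_def by blast
  ultimately show thesis
    using that a' by blast
qed

lemma sorted_arcs_unique:
  assumes f: "inj_on f {1..n}"
    and M1: "arc_system n M1" "region_separated n J M1" "sorted_arcs n J f M1"
    and M2: "arc_system n M2" "region_separated n J M2" "sorted_arcs n J f M2"
    and endpoints: "arc_endpoints M1 = arc_endpoints M2"
  shows "M1 = M2"
proof (rule ccontr)
  assume "M1 \<noteq> M2"
  let ?D = "Domain ((M1 - M2) \<union> (M2 - M1))"
  have "finite ?D"
    using finite_arc_system[OF M1(1)] finite_arc_system[OF M2(1)] by (simp add: finite_Domain)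
  moreover have "?D \<noteq> {}"
    using \<open>M1 \<noteq> M2\<close> by auto
  ultimately obtain a where a: "a \<in> ?D" and least: "\<And>x. x \<in> ?D \<Longrightarrow> \<not> f x < f a"
    using ex_is_arg_min_if_finite[of ?D f] unfolding is_arg_min_def by blast
  have D_sub: "?D \<subseteq> {1..n}"
    using arc_systemD(2)[OF M1(1)] arc_systemD(2)[OF M2(1)] by blast
  have no_smaller: False if "a' \<in> ?D" "a' \<noteq> a" "f a' \<le> f a" for a'
    using least[OF that(1)] that inj_onD[OF f, of a' a] D_sub a by force
  have "Domain M1 = Domain M2" "Range M1 = Range M2"
    using endpoints by (simp_all add: arc_endpoints_def)
  then obtain b1 b2 where b: "(a, b1) \<in> M1" "(a, b2) \<in> M2"
    using a by blast
  have "b1 \<noteq> b2"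
    using a b arc_system_right_unique[OF M1(1)] arc_system_right_unique[OF M2(1)] by blast
  then consider "b1 < b2" | "b2 < b1"
    by linarith
  then show False
  proof cases
    case 1
    obtain a' where "(a', b1) \<in> M2 - M1" "a' \<noteq> a" "f a' \<le> f a"
      by (rule sorted_arcs_smaller_discrepancy[OF M2(1) M1(1,2) M2(3) \<open>Range M1 = Range M2\<close>[symmetric] b 1])
    then show False
      using no_smaller by blast
  next
    case 2
    obtain a' where "(a', b2) \<in> M1 - M2" "a' \<noteq> a" "f a' \<le> f a"
      by (rule sorted_arcs_smaller_discrepancy[OF M1(1) M2(1,2) M1(3) \<open>Range M1 = Range M2\<close> b(2,1) 2])
    then show False
      using no_smaller by blast
  qed
qed

lemma bij_betw_sorted_partitions_arc_endpoints:
  assumes "inj_on f {1..n}"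
  shows "bij_betw (arc_endpoints \<circ> bumps)
           {P \<in> set_partitions n. region_separated n J (bumps P) \<and> sorted_arcs n J f (bumps P)}
           (arc_endpoints ` {M. arc_system n M \<and> region_separated n J M})"
  unfolding bij_betw_def
proof
  have bumps: "inj_on bumps (set_partitions n)" "bumps ` set_partitions n = {M. arc_system n M}"
    using bij_betw_bumps[of n] by (auto simp: bij_betw_def)
  show "inj_on (arc_endpoints \<circ> bumps)
    {P \<in> set_partitions n. region_separated n J (bumps P) \<and> sorted_arcs n J f (bumps P)}"
  proof (rule inj_onI)
    fix P Q
    assume P: "P \<in> {P \<in> set_partitions n. region_separated n J (bumps P) \<and> sorted_arcs n J f (bumps P)}"
      and Q: "Q \<in> {P \<in> set_partitions n. region_separated n J (bumps P) \<and> sorted_arcs n J f (bumps P)}"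
      and eq: "(arc_endpoints \<circ> bumps) P = (arc_endpoints \<circ> bumps) Q"
    have "partition_on {1..n} P" "partition_on {1..n} Q"
      using P Q by (simp_all add: set_partitions_def)
    then have "bumps P = bumps Q"
      using P Q eq by (intro sorted_arcs_unique[OF assms arc_system_bumps _ _ arc_system_bumps]) auto
    then show "P = Q"
      using inj_onD[OF bumps(1)] P Q by blast
  qed
  show "(arc_endpoints \<circ> bumps) `
      {P \<in> set_partitions n. region_separated n J (bumps P) \<and> sorted_arcs n J f (bumps P)} =
    arc_endpoints ` {M. arc_system n M \<and> region_separated n J M}"
  proof (intro equalityI subsetI)
    fix x assume "x \<in> arc_endpoints ` {M. arc_system n M \<and> region_separated n J M}"
    then obtain M where M: "arc_system n M" "region_separated n J M" "x = arc_endpoints M"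
      by blast
    obtain M' where M': "arc_system n M'" "region_separated n J M'" "sorted_arcs n J f M'"
      "arc_endpoints M' = arc_endpoints M"
      using exists_sorted_arcs[OF M(1,2)] by blast
    then obtain P where "P \<in> set_partitions n" "bumps P = M'"
      using bumps(2) by (metis imageE mem_Collect_eq)
    with M M' show "x \<in> (arc_endpoints \<circ> bumps) `
      {P \<in> set_partitions n. region_separated n J (bumps P) \<and> sorted_arcs n J f (bumps P)}"
      by (intro rev_image_eqI[of P]) auto
  qed (use bumps(2) in auto)
qed

section \<open>Nonnesting and noncrossing partitions\<close>

definition nonnesting_arcs :: "(nat \<times> nat) set \<Rightarrow> bool" where
  "nonnesting_arcs M \<longleftrightarrow>
     \<not> (\<exists>i1 i2 j1 j2. (i1, i2) \<in> M \<and> (j1, j2) \<in> M \<and> (i1, i2) \<noteq> (j1, j2) \<and>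
        i1 < j1 \<and> j1 < j2 \<and> j2 < i2)"

definition noncrossing_arcs :: "nat \<Rightarrow> nat set \<Rightarrow> (nat \<times> nat) set \<Rightarrow> bool" where
  "noncrossing_arcs n J M \<longleftrightarrow>
     (\<forall>i1 i2 j1 j2. (i1, i2) \<in> M \<and> (j1, j2) \<in> M \<and> (i1, i2) \<noteq> (j1, j2) \<and>
        i1 < j1 \<and> j1 < i2 \<and> i2 < j2 \<longrightarrow>
        same_region n J i1 j1 \<or> same_region n J i2 j1) \<and>
     (\<forall>i1 i2 j1 j2. (i1, i2) \<in> M \<and> (j1, j2) \<in> M \<and> (i1, i2) \<noteq> (j1, j2) \<and>
        i1 < j1 \<and> j1 < j2 \<and> j2 < i2 \<longrightarrow>
        \<not> same_region n J i1 j1)"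

lemma sorted_arcs_of_nat_iff_nonnesting_arcs:
  assumes M: "arc_system n M" and sep: "region_separated n J M"
  shows "sorted_arcs n J int M \<longleftrightarrow> nonnesting_arcs M"
proof
  assume sorted: "sorted_arcs n J int M"
  have False if arcs: "(i1, i2) \<in> M" "(j1, j2) \<in> M" "i1 < j1" "j1 < j2" "j2 < i2" for i1 i2 j1 j2
  proof -
    have "\<not> same_region n J i1 j2"
      using sep arcs(2) not_same_region_widen[of i1 j1 j2 j2 n J] arcs(3,4)
      unfolding region_separated_def by auto
    then have "int j1 \<le> int i1"
      using sorted arcs unfolding sorted_arcs_def by (meson less_trans)
    with arcs(3) show False
      by simp
  qed
  then show "nonnesting_arcs M"
    unfolding nonnesting_arcs_def by blast
next
  assume "nonnesting_arcs M"
  then show "sorted_arcs n J int M"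
    unfolding sorted_arcs_def nonnesting_arcs_def using arc_systemD(1)[OF M]
    by (metis linorder_not_le of_nat_le_iff order_less_irrefl prod.inject)
qed

lemma noncrossing_arcs_if_sorted_arcs_region_rank:
  assumes M: "arc_system n M" and sep: "region_separated n J M"
    and sorted: "sorted_arcs n J (region_rank n J) M"
  shows "noncrossing_arcs n J M"
proof -
  have no_crossing: False
    if arcs: "(i1, i2) \<in> M" "(j1, j2) \<in> M" "i1 < j1" "j1 < i2" "i2 < j2"
      and regions: "\<not> same_region n J i1 j1" "\<not> same_region n J i2 j1" for i1 i2 j1 j2
  proof -
    have "region_rank n J i1 \<le> region_rank n J j1"
      using sorted arcs regions(2) same_region_commute unfolding sorted_arcs_def by blast
    moreover have "region_rank n J j1 < region_rank n J i1"
      using region_rank_less_if_not_same_region arcs(3) regions(1) arc_systemD(3)[OF M arcs(2)]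
        arcs(4,5) by simp
    ultimately show False
      by simp
  qed
  have no_nesting: False
    if arcs: "(i1, i2) \<in> M" "(j1, j2) \<in> M" "i1 < j1" "j1 < j2" "j2 < i2"
      and region: "same_region n J i1 j1" for i1 i2 j1 j2
  proof -
    have "\<not> same_region n J i1 j2"
      using sep arcs(2) not_same_region_widen[of i1 j1 j2 j2 n J] arcs(3,4)
      unfolding region_separated_def by auto
    then have "region_rank n J j1 \<le> region_rank n J i1"
      using sorted arcs unfolding sorted_arcs_def by (meson less_trans)
    moreover have "region_rank n J i1 < region_rank n J j1"
      using region_rank_less_if_same_region arcs(3) region by blast
    ultimately show False
      by simp
  qed
  show ?thesis
    unfolding noncrossing_arcs_def
  proof (intro conjI allI impI)
    fix i1 i2 j1 j2
    assume "(i1, i2) \<in> M \<and> (j1, j2) \<in> M \<and> (i1, i2) \<noteq> (j1, j2) \<and> i1 < j1 \<and> j1 < i2 \<and> i2 < j2"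
    then show "same_region n J i1 j1 \<or> same_region n J i2 j1"
      using no_crossing by blast
  next
    fix i1 i2 j1 j2
    assume "(i1, i2) \<in> M \<and> (j1, j2) \<in> M \<and> (i1, i2) \<noteq> (j1, j2) \<and> i1 < j1 \<and> j1 < j2 \<and> j2 < i2"
    then show "\<not> same_region n J i1 j1"
      using no_nesting by blast
  qed
qed

lemma sorted_arcs_region_rank_if_noncrossing_arcs:
  assumes M: "arc_system n M" and noncrossing: "noncrossing_arcs n J M"
  shows "sorted_arcs n J (region_rank n J) M"
  unfolding sorted_arcs_def
proof (intro allI impI)
  have crossing: "same_region n J i1 j1 \<or> same_region n J i2 j1"
    if "(i1, i2) \<in> M" "(j1, j2) \<in> M" "i1 < j1" "j1 < i2" "i2 < j2" for i1 i2 j1 j2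
    using noncrossing that unfolding noncrossing_arcs_def by blast
  have nesting: "\<not> same_region n J i1 j1"
    if "(i1, i2) \<in> M" "(j1, j2) \<in> M" "i1 < j1" "j1 < j2" "j2 < i2" for i1 i2 j1 j2
    using noncrossing that unfolding noncrossing_arcs_def by blast
  fix a b a' b'
  assume arcs: "(a, b) \<in> M" "(a', b') \<in> M" "a < b'" "b' < b"
    and region: "\<not> same_region n J a b'"
  have "a' < b'" "a' \<le> n"
    using arc_systemD[OF M arcs(2)] by auto
  show "region_rank n J a' \<le> region_rank n J a"
  proof (rule ccontr)
    assume less: "\<not> region_rank n J a' \<le> region_rank n J a"
    then consider "a < a'" | "a' < a"
      by (metis linorder_neqE_nat order_refl)
    then show False
    proof cases
      case 1
      then have "same_region n J a a'"
        using less region_rank_less_if_not_same_region \<open>a' \<le> n\<close> by fastforce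
      with nesting[OF arcs(1,2) 1 \<open>a' < b'\<close> arcs(4)] show False
        by blast
    next
      case 2
      then have "\<not> same_region n J a' a"
        using less region_rank_less_if_same_region by fastforce
      with crossing[OF arcs(2,1) 2 arcs(3,4)] region show False
        by (simp add: same_region_commute)
    qed
  qed
qed

lemma J_nonnesting_iff_sorted_arcs:
  assumes "P \<in> set_partitions n"
  shows "J_nonnesting n J P \<longleftrightarrow> region_separated n J (bumps P) \<and> sorted_arcs n J int (bumps P)"
proof -
  have P: "partition_on {1..n} P"
    using assms by (simp add: set_partitions_def)
  have "J_nonnesting n J P \<longleftrightarrow> region_separated n J (bumps P) \<and> nonnesting_arcs (bumps P)"
    by (simp only: J_nonnesting_def nonnesting_arcs_def mem_bumps_iff
        region_injective_iff_region_separated[OF P])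
  then show ?thesis
    using sorted_arcs_of_nat_iff_nonnesting_arcs[OF arc_system_bumps[OF P]] by blast
qed

lemma J_noncrossing_iff_sorted_arcs:
  assumes "P \<in> set_partitions n"
  shows "J_noncrossing n J P \<longleftrightarrow>
    region_separated n J (bumps P) \<and> sorted_arcs n J (region_rank n J) (bumps P)"
proof -
  have P: "partition_on {1..n} P"
    using assms by (simp add: set_partitions_def)
  have "J_noncrossing n J P \<longleftrightarrow> region_separated n J (bumps P) \<and> noncrossing_arcs n J (bumps P)"
    by (simp only: J_noncrossing_def noncrossing_arcs_def mem_bumps_iff
        region_injective_iff_region_separated[OF P])
  also have "\<dots> \<longleftrightarrow> region_separated n J (bumps P) \<and> sorted_arcs n J (region_rank n J) (bumps P)"
    using noncrossing_arcs_if_sorted_arcs_region_rank[OF arc_system_bumps[OF P]]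
      sorted_arcs_region_rank_if_noncrossing_arcs[OF arc_system_bumps[OF P]] by blast
  finally show ?thesis .
qed

theorem theorem5p3:
  fixes n :: nat and J :: "nat set"
  assumes "n > 0" and "J \<subseteq> {1..<n}"
  shows "\<exists>f. bij_betw f (NN n J) (NC n J)"
proof -
  let ?A = "arc_endpoints ` {M. arc_system n M \<and> region_separated n J M}"
  have "NN n J = {P \<in> set_partitions n. region_separated n J (bumps P) \<and> sorted_arcs n J int (bumps P)}"
    unfolding NN_def using J_nonnesting_iff_sorted_arcs by blast
  moreover have "inj_on int {1..n}"
    by (simp add: inj_on_def)
  ultimately have NN: "bij_betw (arc_endpoints \<circ> bumps) (NN n J) ?A"
    using bij_betw_sorted_partitions_arc_endpoints by simp
  have "NC n J = {P \<in> set_partitions n.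
      region_separated n J (bumps P) \<and> sorted_arcs n J (region_rank n J) (bumps P)}"
    unfolding NC_def using J_noncrossing_iff_sorted_arcs by blast
  then have NC: "bij_betw (arc_endpoints \<circ> bumps) (NC n J) ?A"
    using bij_betw_sorted_partitions_arc_endpoints[OF inj_on_region_rank] by simp
  have "bij_betw (inv_into (NC n J) (arc_endpoints \<circ> bumps) \<circ> (arc_endpoints \<circ> bumps))
      (NN n J) (NC n J)"
    using NN bij_betw_inv_into[OF NC] by (rule bij_betw_trans)
  then show ?thesis
    by blast
qed

end
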